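(* For every $d\ge2$ and every unitary $U\in\mathcal{U}(d)$, $H_2(U)<1-\frac{2}{d^2+1}$; that is, the upper bound $H_2(U)\le 1-\frac{2}{d^2+1}$ obtained from the maximal stabilizer entropy of the Choi state is not attained by any unitary.
   Context: Let $d=d_L^n$ with $d_L\ge2$, $n\ge1$. On $\mathbb{C}^{d_L}$ let $Z|k\rangle=\omega^k|k\rangle$, $X|k\rangle=|k+1\rangle$ (mod $d_L$), $\omega=e^{2\pi i/d_L}$, $\tau=-e^{i\pi/d_L}$, $D_{(a_1,a_2)}=\tau^{a_1a_2}X^{a_1}Z^{a_2}$, and for $\mathbf a=\mathbf a_1\oplus\cdots\oplus\mathbf a_n\in\mathbb{Z}_{d_L}^{2n}$ let $D_{\mathbf a}=D_{\mathbf a_1}\otimes\cdots\otimes D_{\mathbf a_n}$ acting on $\mathbb{C}^d$. The 2-Clifford entropy of a unitary $U$ on $\mathbb{C}^d$ is $H_2(U)=1-\frac{1}{d^6}\sum_{\mathbf a,\mathbf b}\big|\operatorname{tr}(D_{\mathbf a}^\dagger UD_{\mathbf b}U^\dagger)\big|^4$. *)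

theory Defs
  imports "HOL-Analysis.Analysis"
begin

text \<open>Square matrices of size d are represented as functions nat => nat => complex,
  only the entries with indices < d being relevant.\<close>

definition mmult :: "nat \<Rightarrow> (nat \<Rightarrow> nat \<Rightarrow> complex) \<Rightarrow> (nat \<Rightarrow> nat \<Rightarrow> complex) \<Rightarrow> nat \<Rightarrow> nat \<Rightarrow> complex" where
  "mmult d A B = (\<lambda>i j. \<Sum>k<d. A i k * B k j)"

definition madj :: "(nat \<Rightarrow> nat \<Rightarrow> complex) \<Rightarrow> nat \<Rightarrow> nat \<Rightarrow> complex" where
  "madj A = (\<lambda>i j. cnj (A j i))"

definition mtrace :: "nat \<Rightarrow> (nat \<Rightarrow> nat \<Rightarrow> complex) \<Rightarrow> complex" where
  "mtrace d A = (\<Sum>i<d. A i i)"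

definition unitary_mat :: "nat \<Rightarrow> (nat \<Rightarrow> nat \<Rightarrow> complex) \<Rightarrow> bool" where
  "unitary_mat d U \<longleftrightarrow>
     (\<forall>i<d. \<forall>j<d. mmult d (madj U) U i j = (if i = j then 1 else 0)) \<and>
     (\<forall>i<d. \<forall>j<d. mmult d U (madj U) i j = (if i = j then 1 else 0))"

definition omega :: "nat \<Rightarrow> complex" where
  "omega dL = exp (2 * pi * \<i> / of_nat dL)"

definition tau :: "nat \<Rightarrow> complex" where
  "tau dL = - exp (pi * \<i> / of_nat dL)"

text \<open>Single-qudit Weyl operator D_(a1,a2) = tau^(a1 a2) X^a1 Z^a2 on C^dL, with
  a1, a2 in {0..<dL}; entry (j,k) = <j| D |k>.  X^a1 Z^a2 |k> = omega^(a2 k) |k + a1 mod dL>.\<close>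
definition weyl1 :: "nat \<Rightarrow> nat \<times> nat \<Rightarrow> nat \<Rightarrow> nat \<Rightarrow> complex" where
  "weyl1 dL a j k =
     (if j = (k + fst a) mod dL then tau dL ^ (fst a * snd a) * omega dL ^ (snd a * k) else 0)"

text \<open>i-th tensor factor digit (i = 0 is the first / most significant factor) of a
  basis index j of C^(dL^n) = C^dL (x) ... (x) C^dL.\<close>
definition digit :: "nat \<Rightarrow> nat \<Rightarrow> nat \<Rightarrow> nat \<Rightarrow> nat" where
  "digit dL n i j = (j div dL ^ (n - 1 - i)) mod dL"

text \<open>D_a = D_(a_1) (x) ... (x) D_(a_n) for a = a_1 + ... + a_n in Z_dL^(2n),
  the latter represented as a list of n pairs.\<close>
definition weyl :: "nat \<Rightarrow> nat \<Rightarrow> (nat \<times> nat) list \<Rightarrow> nat \<Rightarrow> nat \<Rightarrow> complex" where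
  "weyl dL n a j k = (\<Prod>i<n. weyl1 dL (a ! i) (digit dL n i j) (digit dL n i k))"

definition weyl_labels :: "nat \<Rightarrow> nat \<Rightarrow> (nat \<times> nat) list set" where
  "weyl_labels dL n = {a. length a = n \<and> (\<forall>p\<in>set a. fst p < dL \<and> snd p < dL)}"

definition H2 :: "nat \<Rightarrow> nat \<Rightarrow> (nat \<Rightarrow> nat \<Rightarrow> complex) \<Rightarrow> real" where
  "H2 dL n U = (let d = dL ^ n in
     1 - (1 / real d ^ 6) *
       (\<Sum>a\<in>weyl_labels dL n. \<Sum>b\<in>weyl_labels dL n.
          cmod (mtrace d (mmult d (mmult d (mmult d (madj (weyl dL n a)) U) (weyl dL n b)) (madj U))) ^ 4))"

end

theory Submission
  imports Defs
begin

(* Write c(a,b) = |tr(D_a^H U D_b U^H)|.  The d^2 Weyl operators are an orthogonal basis of the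
   d x d matrices for the Hilbert-Schmidt inner product, each of norm d, so Parseval gives
   sum_{a,b} c(a,b)^2 = d^4.  Two of these d^4 coefficients are pinned whatever U is:
   c(0,0) = tr 1 = d, and c(0,b) = |tr D_b| = 0 for a pure shift b.  Cauchy-Schwarz on the
   remaining d^4 - 2 coefficients gives sum c^4 >= d^4 + (d^4 - d^2)^2 / (d^4 - 2), which is
   strictly larger than 2 d^6 / (d^2 + 1). *)

section \<open>Finite sums\<close>

lemma mult_cnj_eq_1: "cmod z = 1 \<Longrightarrow> z * cnj z = 1"
  by (metis complex_norm_square mult.commute of_real_1 power_one)

lemma sum_if_shift_mod:
  fixes x y m :: nat and c :: "'a::comm_monoid_add"
  assumes "x < m" "y < m"
  shows "(\<Sum>a<m. if x = (y + a) mod m then c else 0) = c"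
proof -
  have "x = (y + a) mod m \<longleftrightarrow> a = (x + m - y) mod m" if "a < m" for a
    using assms that by (auto simp: mod_if)
  then have "(\<Sum>a<m. if x = (y + a) mod m then c else 0) = (\<Sum>a<m. if a = (x + m - y) mod m then c else 0)"
    by (intro sum.cong) auto
  also have "\<dots> = c"
    using assms by simp
  finally show ?thesis .
qed

lemma sum_lists_length_eq_prod:
  fixes f :: "nat \<Rightarrow> 'a \<Rightarrow> 'b::comm_semiring_1"
  assumes "finite A"
  shows "(\<Sum>xs\<in>{xs. set xs \<subseteq> A \<and> length xs = n}. \<Prod>t<n. f t (xs ! t)) = (\<Prod>t<n. \<Sum>x\<in>A. f t x)"
proof (induction n arbitrary: f)
  case 0
  have "{xs. set xs \<subseteq> A \<and> length xs = 0} = {[]}"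
    by auto
  then show ?case by simp
next
  case (Suc n)
  have "(\<Sum>xs\<in>{xs. set xs \<subseteq> A \<and> length xs = Suc n}. \<Prod>t<Suc n. f t (xs ! t))
      = (\<Sum>(xs, x)\<in>{xs. set xs \<subseteq> A \<and> length xs = n} \<times> A. f 0 x * (\<Prod>t<n. f (Suc t) (xs ! t)))"
    unfolding lists_length_Suc_eq
    by (subst sum.reindex)
       (auto simp: inj_on_def prod.lessThan_Suc_shift split_beta simp del: prod.lessThan_Suc)
  also have "\<dots> = (\<Sum>x\<in>A. f 0 x) * (\<Sum>xs\<in>{xs. set xs \<subseteq> A \<and> length xs = n}. \<Prod>t<n. f (Suc t) (xs ! t))"
    by (simp only: sum.cartesian_product[symmetric] sum_product) (rule sum.swap)
  also have "\<dots> = (\<Sum>x\<in>A. f 0 x) * (\<Prod>t<n. \<Sum>x\<in>A. f (Suc t) x)"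
    using Suc.IH[of "\<lambda>t. f (Suc t)"] by simp
  also have "\<dots> = (\<Prod>t<Suc n. \<Sum>x\<in>A. f t x)"
    by (simp only: prod.lessThan_Suc_shift)
  finally show ?case .
qed

lemma eq_if_div_power_mod_eq:
  fixes b :: nat
  assumes "i < b ^ n" "k < b ^ n" "\<forall>s<n. i div b ^ s mod b = k div b ^ s mod b"
  shows "i = k"
  using assms
proof (induction n arbitrary: i k)
  case 0
  then show ?case by simp
next
  case (Suc n)
  have "i div b = k div b"
  proof (rule Suc.IH)
    show "i div b < b ^ n" "k div b < b ^ n"
      using Suc.prems(1,2) by (auto simp: less_mult_imp_div_less mult.commute)
    show "\<forall>s<n. i div b div b ^ s mod b = k div b div b ^ s mod b"
      using Suc.prems(3) by (auto simp: div_mult2_eq)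
  qed
  moreover have "i mod b = k mod b"
    using Suc.prems(3) by (metis div_by_1 power_0 zero_less_Suc)
  ultimately show ?case
    by (metis div_mod_decomp)
qed

lemma sum_cmod_sq_orthogonal_expansion:
  fixes \<gamma> :: "'x \<Rightarrow> 'p \<Rightarrow> complex" and M :: "'p \<Rightarrow> complex"
  assumes "finite P"
    and orthogonal: "\<And>p q. p \<in> P \<Longrightarrow> q \<in> P \<Longrightarrow>
                     (\<Sum>x\<in>X. \<gamma> x p * cnj (\<gamma> x q)) = (if p = q then of_real K else 0)"
  shows "(\<Sum>x\<in>X. (cmod (\<Sum>p\<in>P. \<gamma> x p * M p))\<^sup>2) = K * (\<Sum>p\<in>P. (cmod (M p))\<^sup>2)"
proof -
  have "complex_of_real (\<Sum>x\<in>X. (cmod (\<Sum>p\<in>P. \<gamma> x p * M p))\<^sup>2)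
      = (\<Sum>x\<in>X. (\<Sum>p\<in>P. \<gamma> x p * M p) * cnj (\<Sum>q\<in>P. \<gamma> x q * M q))"
    by (simp only: of_real_sum complex_norm_square)
  also have "\<dots> = (\<Sum>x\<in>X. \<Sum>p\<in>P. \<Sum>q\<in>P. (\<gamma> x p * M p) * cnj (\<gamma> x q * M q))"
    by (simp add: sum_product cnj_sum)
  also have "\<dots> = (\<Sum>p\<in>P. \<Sum>q\<in>P. M p * cnj (M q) * (\<Sum>x\<in>X. \<gamma> x p * cnj (\<gamma> x q)))"
    by (subst sum.swap) (simp add: sum.swap[of _ X] sum_distrib_left mult_ac)
  also have "\<dots> = (\<Sum>p\<in>P. M p * cnj (M p) * of_real K)"
    using assms(1) by (simp add: orthogonal if_distrib sum.delta cong: if_cong)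
  also have "\<dots> = complex_of_real (K * (\<Sum>p\<in>P. (cmod (M p))\<^sup>2))"
    by (simp only: of_real_mult of_real_sum complex_norm_square sum_distrib_left mult_ac)
  finally show ?thesis
    by (simp only: of_real_eq_iff)
qed

lemma sum_power4_lower_bound:
  fixes c :: "'a \<Rightarrow> real"
  assumes "finite I" "x0 \<in> I" "x1 \<in> I" "x0 \<noteq> x1" "c x1 = 0"
  shows "c x0 ^ 4 + ((\<Sum>x\<in>I. c x ^ 2) - c x0 ^ 2)\<^sup>2 / (real (card I) - 2) \<le> (\<Sum>x\<in>I. c x ^ 4)"
proof -
  define J where "J = I - {x0, x1}"
  have sum_split: "(\<Sum>x\<in>I. f x) = f x0 + f x1 + (\<Sum>x\<in>J. f x)" for f :: "'a \<Rightarrow> real"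
    using assms sum.subset_diff[of "{x0, x1}" I f] unfolding J_def by simp
  have "card {x0, x1} \<le> card I"
    using assms by (intro card_mono) auto
  then have card_J: "real (card J) = real (card I) - 2"
    using assms unfolding J_def by (simp add: card_Diff_subset of_nat_diff)
  have "(\<Sum>x\<in>J. c x ^ 2)\<^sup>2 \<le> (\<Sum>x\<in>J. c x ^ 4) * real (card J)"
    using sum_squared_le_sum_of_squares[of "\<lambda>x. c x ^ 2" J] by (simp add: power_mult[symmetric])
  then have "(\<Sum>x\<in>J. c x ^ 2)\<^sup>2 / real (card J) \<le> (\<Sum>x\<in>J. c x ^ 4)"
    by (cases "card J = 0") (simp_all add: sum_nonneg pos_divide_le_eq)
  then show ?thesis
    using assms(5) by (simp add: sum_split[of "\<lambda>x. c x ^ 2"] sum_split[of "\<lambda>x. c x ^ 4"] card_J)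
qed

lemma two_div_add_one_less:
  fixes D :: real
  assumes "D \<ge> 2"
  shows "2 / (D + 1) < (D\<^sup>2 + (D\<^sup>2 - D)\<^sup>2 / (D\<^sup>2 - 2)) / D ^ 3"
proof -
  define N where "N = D\<^sup>2 + (D\<^sup>2 - D)\<^sup>2 / (D\<^sup>2 - 2)"
  have "D\<^sup>2 \<ge> 2 * 2"
    using assms by (metis power2_eq_square mult_mono zero_le_numeral order_trans)
  then have pos: "D\<^sup>2 - 2 > 0" "D + 1 > 0" "D ^ 3 > 0"
    using assms by auto
  have N_mult: "N * (D\<^sup>2 - 2) = D\<^sup>2 * (D\<^sup>2 - 2) + (D\<^sup>2 - D)\<^sup>2"
    unfolding N_def using pos by (simp add: field_simps)
  have "N * (D + 1) * (D\<^sup>2 - 2) - 2 * D ^ 3 * (D\<^sup>2 - 2) = N * (D\<^sup>2 - 2) * (D + 1) - 2 * D ^ 3 * (D\<^sup>2 - 2)"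
    by (simp add: algebra_simps)
  also have "\<dots> = D\<^sup>2 * (D - 1)"
    unfolding N_mult by (simp add: algebra_simps power2_eq_square power3_eq_cube)
  finally have "N * (D + 1) * (D\<^sup>2 - 2) - 2 * D ^ 3 * (D\<^sup>2 - 2) = D\<^sup>2 * (D - 1)" .
  moreover have "D\<^sup>2 * (D - 1) > 0"
    using assms by simp
  ultimately have "2 * D ^ 3 * (D\<^sup>2 - 2) < N * (D + 1) * (D\<^sup>2 - 2)"
    by linarith
  then have "2 * D ^ 3 < N * (D + 1)"
    using pos(1) by simp
  then show ?thesis
    unfolding N_def[symmetric] using pos by (simp add: field_simps)
qed

section \<open>Roots of unity\<close>

lemma omega_power_eq_1_iff:
  assumes "dL \<ge> 1"
  shows "omega dL ^ j = 1 \<longleftrightarrow> dL dvd j"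
proof -
  have "omega dL ^ j = exp (2 * complex_of_real pi * \<i> * of_nat j / of_nat dL)"
    unfolding omega_def by (simp add: exp_of_nat_mult[symmetric] mult_ac)
  then show ?thesis using complex_root_unity_eq_1[OF assms] by simp
qed

lemma cmod_omega_power [simp]: "cmod (omega dL ^ m) = 1"
  unfolding omega_def by (simp add: norm_power norm_exp_eq_Re)

lemma cmod_tau_power [simp]: "cmod (tau dL ^ m) = 1"
  unfolding tau_def by (simp add: norm_power norm_exp_eq_Re)

lemma cnj_omega_power:
  assumes "dL \<ge> 1" "y \<le> dL"
  shows "cnj (omega dL ^ y) = omega dL ^ (dL - y)"
proof -
  have "omega dL ^ y * omega dL ^ (dL - y) = 1"
    using assms by (simp add: power_add[symmetric] omega_power_eq_1_iff)
  moreover have "omega dL ^ y * cnj (omega dL ^ y) = 1"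
    by (simp add: mult_cnj_eq_1 del: complex_cnj_power)
  moreover have "omega dL ^ y \<noteq> 0"
    using cmod_omega_power[of dL y] by (metis norm_zero zero_neq_one)
  ultimately show ?thesis
    by (metis mult_left_cancel)
qed

lemma sum_omega_power_orthogonal:
  assumes "dL \<ge> 1" "y < dL" "y' < dL"
  shows "(\<Sum>k<dL. omega dL ^ (k * y) * cnj (omega dL ^ (k * y'))) = (if y = y' then of_nat dL else 0)"
proof -
  define z where "z = omega dL ^ (y + (dL - y'))"
  have "omega dL ^ y * cnj (omega dL ^ y') = z"
    using assms unfolding z_def by (simp add: cnj_omega_power power_add[symmetric] del: complex_cnj_power)
  then have "omega dL ^ (k * y) * cnj (omega dL ^ (k * y')) = z ^ k" for k
    by (metis complex_cnj_power mult.commute power_mult power_mult_distrib)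
  then have sum_eq: "(\<Sum>k<dL. omega dL ^ (k * y) * cnj (omega dL ^ (k * y'))) = (\<Sum>k<dL. z ^ k)"
    by simp
  have z_eq_1: "z = 1 \<longleftrightarrow> y = y'"
  proof -
    have "dL dvd y + (dL - y') \<longleftrightarrow> y + (dL - y') = dL"
    proof
      assume "dL dvd y + (dL - y')"
      then obtain q where q: "y + (dL - y') = dL * q" by (rule dvdE)
      have "0 < dL * q" "dL * q < dL * 2" using assms q by linarith+
      then have "0 < q" "q < 2" by (simp_all only: nat_0_less_mult_iff mult_less_cancel1)
      then have "q = 1" by simp
      then show "y + (dL - y') = dL" using q by simp
    qed simp
    then show ?thesis
      using assms unfolding z_def omega_power_eq_1_iff[OF assms(1)] by auto
  qed
  have "z ^ dL = 1"
    unfolding z_def power_mult[symmetric] using assms(1)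
    by (simp add: omega_power_eq_1_iff)
  then show ?thesis
    unfolding sum_eq using z_eq_1 by (auto simp: sum_gp_strict)
qed

section \<open>Matrices\<close>

lemma mtrace_mmult_commute: "mtrace d (mmult d A B) = mtrace d (mmult d B A)"
  unfolding mtrace_def mmult_def by (subst sum.swap) (simp add: mult.commute)

lemma mmult_assoc: "mmult d (mmult d A B) C = mmult d A (mmult d B C)"
  unfolding mmult_def
  by (intro ext) (simp add: sum_distrib_left sum_distrib_right mult.assoc, rule sum.swap)

lemma mmult_identity_left:
  assumes "\<forall>i<d. \<forall>j<d. A i j = (if i = j then 1 else 0)" "i < d"
  shows "mmult d A B i j = B i j"
proof -
  have "(\<Sum>k<d. A i k * B k j) = (\<Sum>k<d. if k = i then B i j else 0)"
    using assms by (intro sum.cong) auto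
  then show ?thesis
    using assms(2) by (simp add: mmult_def)
qed

lemma mtrace_unitary_conj:
  assumes U: "unitary_mat d U" and A: "\<forall>i<d. \<forall>j<d. A i j = (if i = j then 1 else 0)"
  shows "mtrace d (mmult d (mmult d (mmult d A U) B) (madj U)) = mtrace d B"
proof -
  have "\<forall>i<d. \<forall>j<d. mmult d (madj U) (mmult d A U) i j = (if i = j then 1 else 0)"
    using U A unfolding unitary_mat_def mmult_def[of d "madj U"] by (simp add: mmult_identity_left)
  then have "mtrace d (mmult d (mmult d (madj U) (mmult d A U)) B) = mtrace d B"
    unfolding mtrace_def by (simp add: mmult_identity_left)
  moreover have "mtrace d (mmult d (mmult d (mmult d A U) B) (madj U))
      = mtrace d (mmult d (mmult d (madj U) (mmult d A U)) B)"
    by (subst mtrace_mmult_commute) (simp only: mmult_assoc)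
  ultimately show ?thesis
    by simp
qed

lemma mtrace_conj_eq_sum:
  "mtrace d (mmult d (mmult d (mmult d (madj A) U) B) (madj U))
   = (\<Sum>i<d. \<Sum>l<d. \<Sum>k<d. \<Sum>j<d. cnj (A j i) * B k l * (U j k * cnj (U i l)))"
  unfolding mtrace_def mmult_def madj_def
  by (simp add: sum_distrib_left sum_distrib_right mult_ac)

lemma unitary_sum_cmod_sq:
  assumes "unitary_mat d U"
  shows "(\<Sum>j<d. \<Sum>k<d. (cmod (U j k))\<^sup>2) = real d"
proof -
  have "(\<Sum>j<d. (cmod (U j k))\<^sup>2) = 1" if "k < d" for k
  proof -
    have "(\<Sum>j<d. U j k * cnj (U j k)) = 1"
      using assms that unfolding unitary_mat_def mmult_def madj_def by (simp add: mult.commute)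
    then have "complex_of_real (\<Sum>j<d. (cmod (U j k))\<^sup>2) = 1"
      by (simp only: of_real_sum complex_norm_square)
    then show ?thesis
      by (metis of_real_1 of_real_eq_iff)
  qed
  then show ?thesis
    by (subst sum.swap) simp
qed

section \<open>Weyl operators\<close>

lemma weyl1_orthogonal:
  assumes "dL \<ge> 1" "x < dL" "y < dL" "x' < dL" "y' < dL"
  shows "(\<Sum>p\<in>{..<dL} \<times> {..<dL}. weyl1 dL p x y * cnj (weyl1 dL p x' y'))
         = (if x = x' \<and> y = y' then of_nat dL else 0)"
proof -
  have shift_sum: "(\<Sum>a2<dL. weyl1 dL (a1, a2) x y * cnj (weyl1 dL (a1, a2) x' y'))
      = (if y = y' \<and> x = x' \<and> x = (y + a1) mod dL then of_nat dL else 0)" for a1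
  proof (cases "x = (y + a1) mod dL \<and> x' = (y' + a1) mod dL")
    case True
    have "(\<Sum>a2<dL. weyl1 dL (a1, a2) x y * cnj (weyl1 dL (a1, a2) x' y'))
        = (\<Sum>a2<dL. (tau dL ^ (a1 * a2) * cnj (tau dL ^ (a1 * a2))) *
                     (omega dL ^ (a2 * y) * cnj (omega dL ^ (a2 * y'))))"
      using True unfolding weyl1_def by (intro sum.cong) (auto simp: mult_ac)
    also have "\<dots> = (\<Sum>a2<dL. omega dL ^ (a2 * y) * cnj (omega dL ^ (a2 * y')))"
      by (simp only: mult_cnj_eq_1 cmod_tau_power mult_1_left)
    also have "\<dots> = (if y = y' then of_nat dL else 0)"
      by (rule sum_omega_power_orthogonal[OF assms(1,3,5)])
    finally show ?thesis
      using True by auto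
  next
    case False
    then show ?thesis
      unfolding weyl1_def by auto
  qed
  have "(\<Sum>p\<in>{..<dL} \<times> {..<dL}. weyl1 dL p x y * cnj (weyl1 dL p x' y'))
      = (\<Sum>a1<dL. if y = y' \<and> x = x' \<and> x = (y + a1) mod dL then of_nat dL else 0)"
    by (simp add: sum.cartesian_product' shift_sum)
  also have "\<dots> = (if x = x' \<and> y = y' then of_nat dL else 0)"
    using assms sum_if_shift_mod[of x dL y "of_nat dL :: complex"] by auto
  finally show ?thesis .
qed

lemma digit_less: "dL \<ge> 1 \<Longrightarrow> digit dL n t i < dL"
  unfolding digit_def by simp

lemma eq_if_digit_eq:
  assumes "i < dL ^ n" "k < dL ^ n" "\<forall>t<n. digit dL n t i = digit dL n t k"
  shows "i = k"
proof (rule eq_if_div_power_mod_eq[OF assms(1,2)], intro allI impI)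
  fix s assume "s < n"
  then have "digit dL n (n - 1 - s) i = digit dL n (n - 1 - s) k" "n - 1 - (n - 1 - s) = s"
    using assms(3) by auto
  then show "i div dL ^ s mod dL = k div dL ^ s mod dL"
    unfolding digit_def by simp
qed

lemma weyl_labels_eq: "weyl_labels dL n = {a. set a \<subseteq> {..<dL} \<times> {..<dL} \<and> length a = n}"
  unfolding weyl_labels_def by auto

lemma finite_weyl_labels: "finite (weyl_labels dL n)"
  unfolding weyl_labels_eq by (simp add: finite_lists_length_eq)

lemma card_weyl_labels: "card (weyl_labels dL n) = (dL ^ n) ^ 2"
  unfolding weyl_labels_eq by (simp add: card_lists_length_eq power2_eq_square power_mult_distrib)

lemma weyl_orthogonal:
  assumes "dL \<ge> 1" "i < dL ^ n" "j < dL ^ n" "k < dL ^ n" "l < dL ^ n"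
  shows "(\<Sum>a\<in>weyl_labels dL n. weyl dL n a i j * cnj (weyl dL n a k l))
       = (if i = k \<and> j = l then of_nat (dL ^ n) else 0)"
proof -
  let ?digit_eq = "\<lambda>t. digit dL n t i = digit dL n t k \<and> digit dL n t j = digit dL n t l"
  have "(\<Sum>a\<in>weyl_labels dL n. weyl dL n a i j * cnj (weyl dL n a k l))
      = (\<Prod>t<n. \<Sum>p\<in>{..<dL} \<times> {..<dL}.
           weyl1 dL p (digit dL n t i) (digit dL n t j) * cnj (weyl1 dL p (digit dL n t k) (digit dL n t l)))"
    unfolding weyl_def weyl_labels_eq cnj_prod prod.distrib[symmetric]
    by (rule sum_lists_length_eq_prod) simp
  also have "\<dots> = (\<Prod>t<n. if ?digit_eq t then of_nat dL else 0)"
    using assms(1) by (intro prod.cong refl weyl1_orthogonal) (auto intro: digit_less)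
  also have "\<dots> = (if i = k \<and> j = l then of_nat (dL ^ n) else 0)"
    using eq_if_digit_eq[OF assms(2,4)] eq_if_digit_eq[OF assms(3,5)]
    by (auto simp: prod_zero_iff)
  finally show ?thesis .
qed

lemma weyl_zero_label:
  assumes "dL \<ge> 1" "i < dL ^ n" "j < dL ^ n"
  shows "weyl dL n (replicate n (0, 0)) i j = (if i = j then 1 else 0)"
proof -
  have "weyl dL n (replicate n (0, 0)) i j = (\<Prod>t<n. if digit dL n t i = digit dL n t j then 1 else 0)"
    unfolding weyl_def by (intro prod.cong refl) (simp add: weyl1_def digit_def)
  also have "\<dots> = (if i = j then 1 else 0)"
    using eq_if_digit_eq[OF assms(2,3)] by (auto simp: prod_zero_iff)
  finally show ?thesis .
qed

lemma weyl_diag_eq_0: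
  assumes "t < n" "0 < fst (a ! t)" "fst (a ! t) < dL"
  shows "weyl dL n a k k = 0"
proof -
  have "x \<noteq> (x + s) mod dL" if "x < dL" "0 < s" "s < dL" for x s
    using that by (auto simp: mod_if)
  then have "weyl1 dL (a ! t) (digit dL n t k) (digit dL n t k) = 0"
    unfolding weyl1_def using assms by (simp add: digit_less)
  then show ?thesis
    unfolding weyl_def using assms(1) by (auto simp: prod_zero_iff)
qed

section \<open>Weyl overlaps of a unitary\<close>

definition weyl_overlap :: "nat \<Rightarrow> nat \<Rightarrow> (nat \<Rightarrow> nat \<Rightarrow> complex) \<Rightarrow> (nat \<times> nat) list \<Rightarrow> (nat \<times> nat) list \<Rightarrow> complex"
  where "weyl_overlap dL n U a b =
    mtrace (dL ^ n) (mmult (dL ^ n) (mmult (dL ^ n) (mmult (dL ^ n) (madj (weyl dL n a)) U) (weyl dL n b)) (madj U))"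

lemma H2_eq_weyl_overlap:
  "H2 dL n U = 1 - (\<Sum>(a, b)\<in>weyl_labels dL n \<times> weyl_labels dL n. cmod (weyl_overlap dL n U a b) ^ 4)
                 / real (dL ^ n) ^ 6"
  unfolding H2_def weyl_overlap_def Let_def by (simp add: sum.cartesian_product)

lemma sum_cmod_sq_weyl_overlap:
  assumes dL: "dL \<ge> 1" and U: "unitary_mat (dL ^ n) U"
  shows "(\<Sum>(a, b)\<in>weyl_labels dL n \<times> weyl_labels dL n. (cmod (weyl_overlap dL n U a b))\<^sup>2)
         = real (dL ^ n) ^ 4"
proof -
  define d where "d = dL ^ n"
  define L where "L = weyl_labels dL n"
  define Q where "Q = {..<d} \<times> {..<d} \<times> {..<d} \<times> {..<d}"
  \<comment> \<open>The overlap pairs the orthogonal family conj D_a (x) D_b (squared norms d^2)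
    with the vector U (x) conj U (squared norm d^2); Parseval then gives d^4.\<close>
  define \<gamma> :: "(nat \<times> nat) list \<times> (nat \<times> nat) list \<Rightarrow> nat \<times> nat \<times> nat \<times> nat \<Rightarrow> complex"
    where "\<gamma> = (\<lambda>(a, b) (i, l, k, j). cnj (weyl dL n a j i) * weyl dL n b k l)"
  define M :: "nat \<times> nat \<times> nat \<times> nat \<Rightarrow> complex"
    where "M = (\<lambda>(i, l, k, j). U j k * cnj (U i l))"
  have overlap_eq: "weyl_overlap dL n U a b = (\<Sum>q\<in>Q. \<gamma> (a, b) q * M q)" for a b
    unfolding weyl_overlap_def mtrace_conj_eq_sum d_def[symmetric] Q_def \<gamma>_def M_def
    by (simp add: sum.cartesian_product mult_ac) (intro sum.cong refl, clarsimp simp: mult_ac)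
  have orthogonal: "(\<Sum>x\<in>L \<times> L. \<gamma> x p * cnj (\<gamma> x q)) = (if p = q then of_real (real d ^ 2) else 0)"
    if "p \<in> Q" "q \<in> Q" for p q
  proof -
    obtain i l k j i' l' k' j' where pq: "p = (i, l, k, j)" "q = (i', l', k', j')"
      by (cases p, cases q) auto
    have "(\<Sum>x\<in>L \<times> L. \<gamma> x p * cnj (\<gamma> x q))
        = (\<Sum>a\<in>L. weyl dL n a j' i' * cnj (weyl dL n a j i)) * (\<Sum>b\<in>L. weyl dL n b k l * cnj (weyl dL n b k' l'))"
      unfolding sum_product sum.cartesian_product pq \<gamma>_def by (intro sum.cong) (auto simp: mult_ac)
    also have "\<dots> = (if p = q then of_real (real d ^ 2) else 0)"
      using that dL unfolding pq Q_def L_def d_def by (auto simp: weyl_orthogonal power2_eq_square)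
    finally show ?thesis .
  qed
  have "(\<Sum>(a, b)\<in>L \<times> L. (cmod (weyl_overlap dL n U a b))\<^sup>2) = (\<Sum>x\<in>L \<times> L. (cmod (\<Sum>q\<in>Q. \<gamma> x q * M q))\<^sup>2)"
    by (simp add: overlap_eq case_prod_beta)
  also have "\<dots> = real d ^ 2 * (\<Sum>q\<in>Q. (cmod (M q))\<^sup>2)"
    by (rule sum_cmod_sq_orthogonal_expansion[OF _ orthogonal]) (simp_all add: Q_def)
  also have "(\<Sum>q\<in>Q. (cmod (M q))\<^sup>2) = (\<Sum>i<d. \<Sum>l<d. \<Sum>k<d. \<Sum>j<d. (cmod (U j k))\<^sup>2 * (cmod (U i l))\<^sup>2)"
    unfolding Q_def M_def
    by (simp add: sum.cartesian_product) (intro sum.cong refl, clarsimp simp: norm_mult power_mult_distrib)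
  also have "\<dots> = (\<Sum>i<d. \<Sum>l<d. (cmod (U i l))\<^sup>2 * (\<Sum>k<d. \<Sum>j<d. (cmod (U j k))\<^sup>2))"
    by (simp add: sum_distrib_left mult_ac)
  also have "\<dots> = real d ^ 2"
    using unitary_sum_cmod_sq[OF U[folded d_def]]
    by (simp add: sum_distrib_right[symmetric] power2_eq_square) (subst sum.swap, simp)
  finally show ?thesis
    unfolding d_def L_def by simp
qed

lemma weyl_overlap_zero_label:
  assumes "dL \<ge> 1" "unitary_mat (dL ^ n) U"
  shows "weyl_overlap dL n U (replicate n (0, 0)) b = mtrace (dL ^ n) (weyl dL n b)"
  unfolding weyl_overlap_def
proof (rule mtrace_unitary_conj[OF assms(2)], intro allI impI)
  fix i j assume "i < dL ^ n" "j < dL ^ n"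
  then show "madj (weyl dL n (replicate n (0, 0))) i j = (if i = j then 1 else 0)"
    using assms(1) by (simp add: madj_def weyl_zero_label)
qed

theorem theorem5:
  fixes dL n :: nat and U :: "nat \<Rightarrow> nat \<Rightarrow> complex"
  assumes "dL \<ge> 2" and "n \<ge> 1"
    and "unitary_mat (dL ^ n) U"
  shows "H2 dL n U < 1 - 2 / (real (dL ^ n) ^ 2 + 1)"
proof -
  define d where "d = real (dL ^ n)"
  define L where "L = weyl_labels dL n"
  define c where "c = (\<lambda>(a, b). cmod (weyl_overlap dL n U a b))"
  define a0 :: "(nat \<times> nat) list" where "a0 = replicate n (0, 0)"
  define b0 :: "(nat \<times> nat) list" where "b0 = (1, 0) # replicate (n - 1) (0, 0)"
  have "a0 \<in> L" "b0 \<in> L" "a0 \<noteq> b0"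
    using assms(1,2) unfolding a0_def b0_def L_def weyl_labels_def by (auto, cases n) auto
  moreover have "c (a0, a0) = d" "c (a0, b0) = 0"
    using assms unfolding c_def d_def a0_def b0_def
    by (simp_all add: weyl_overlap_zero_label mtrace_def weyl_zero_label weyl_diag_eq_0[of 0] norm_power)
  moreover have "(\<Sum>x\<in>L \<times> L. c x ^ 2) = d ^ 4" "card (L \<times> L) = d ^ 4"
    using sum_cmod_sq_weyl_overlap[OF _ assms(3)] assms(1)
    unfolding c_def d_def L_def by (simp_all add: case_prod_beta card_weyl_labels card_cartesian_product)
  ultimately have lower: "(d\<^sup>2)\<^sup>2 + ((d\<^sup>2)\<^sup>2 - d\<^sup>2)\<^sup>2 / ((d\<^sup>2)\<^sup>2 - 2) \<le> (\<Sum>x\<in>L \<times> L. c x ^ 4)"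
    using sum_power4_lower_bound[of "L \<times> L" "(a0, a0)" "(a0, b0)" c]
    by (simp add: L_def finite_weyl_labels power_mult[symmetric])
  have "dL \<le> dL ^ n"
    using assms(1,2) by (simp add: self_le_power)
  then have "2 \<le> d"
    using assms(1) unfolding d_def by linarith
  then have "2\<^sup>2 \<le> d\<^sup>2"
    by (rule power_mono) simp
  then have "2 / (d\<^sup>2 + 1) < ((d\<^sup>2)\<^sup>2 + ((d\<^sup>2)\<^sup>2 - d\<^sup>2)\<^sup>2 / ((d\<^sup>2)\<^sup>2 - 2)) / (d\<^sup>2) ^ 3"
    by (intro two_div_add_one_less) simp
  also have "\<dots> \<le> (\<Sum>x\<in>L \<times> L. c x ^ 4) / (d\<^sup>2) ^ 3"
    using lower by (rule divide_right_mono) simp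
  finally show ?thesis
    unfolding H2_eq_weyl_overlap d_def[symmetric] L_def[symmetric] c_def
    by (simp add: power_mult[symmetric] case_prod_unfold)
qed

end
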